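(* Let $0<|q|<1$ and let $U_x,U_y\subseteq\mathbb{C}$ be $q$-open. The left diagonal holomorphic $q$-complex $0\to\mathcal{O}(U_x\times U_x)[[y]]\xrightarrow{d_y^0}\mathcal{O}(U_x\times U_x)[[y]]^{\oplus2}\xrightarrow{d_y^1}\mathcal{O}(U_x\times U_x)[[y]]\xrightarrow{\pi_y}\mathcal{O}(U_x)\to0$ and the right diagonal holomorphic $q$-complex $0\to[[x]]\mathcal{O}(U_y\times U_y)\xrightarrow{d_x^0}([[x]]\mathcal{O}(U_y\times U_y))^{\oplus2}\xrightarrow{d_x^1}[[x]]\mathcal{O}(U_y\times U_y)\xrightarrow{\pi_x}\mathcal{O}(U_y)\to0$ are exact.
   Context: $V\subseteq\mathbb{C}$ is $q$-open if open, $0\in V$, $qV\subseteq V$. $\mathcal{O}(U_x\times U_x)[[y]]$ is the Fréchet space of formal series $f=\sum_{n\ge0}f_n(x_1,x_2)y^n$ with $f_n$ holomorphic on $U_x\times U_x$ (product topology). Operators: $N_yf=\sum_{n\ge1}f_{n-1}y^n$, $D_{y,q}f=\sum_nq^nf_ny^n$, $x_i$ = multiplication by the coordinate $x_i$ on coefficients. $d_y^0f=(N_yf,\ (x_2-qx_1D_{y,q})f)$, $d_y^1(f,g)=(x_2-x_1D_{y,q})f-N_yg$, $\pi_y(\sum_nh_ny^n)=h_0(x,x)$. Symmetrically $[[x]]\mathcal{O}(U_y\times U_y)$ consists of $f=\sum_nx^nf_n(y_1,y_2)$, $f_n\in\mathcal{O}(U_y\times U_y)$, with $N_xf=\sum_{n\ge1}x^nf_{n-1}$,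 $D_{x,q}f=\sum_nx^nq^nf_n$, $d_x^0f=((y_1-qy_2D_{x,q})f,\ N_xf)$, $d_x^1(f,g)=N_xf+(y_2D_{x,q}-y_1)g$, $\pi_x(\sum_nx^nh_n)=h_0(y,y)$. *)

theory Defs
  imports "HOL-Analysis.Analysis"
begin

definition q_open :: "complex \<Rightarrow> complex set \<Rightarrow> bool" where
  "q_open q V \<longleftrightarrow> open V \<and> 0 \<in> V \<and> ((\<lambda>z. q * z) ` V \<subseteq> V)"

definition holo2 :: "complex set \<Rightarrow> (complex \<times> complex \<Rightarrow> complex) \<Rightarrow> bool" where
  "holo2 U f \<longleftrightarrow> (\<forall>z\<in>U \<times> U. \<exists>a b. (f has_derivative (\<lambda>h. a * fst h + b * snd h)) (at z))"

text \<open>Formal power series in one variable whose n-th coefficient is a function of two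
  complex variables; the element of O(U x U)[[t]] is the coefficient sequence.\<close>
type_synonym fser = "nat \<Rightarrow> complex \<times> complex \<Rightarrow> complex"

definition ser_space :: "complex set \<Rightarrow> fser set" where
  "ser_space U = {f. \<forall>n. holo2 U (f n)}"

definition ser_eq :: "complex set \<Rightarrow> fser \<Rightarrow> fser \<Rightarrow> bool" where
  "ser_eq U f g \<longleftrightarrow> (\<forall>n. \<forall>z\<in>U \<times> U. f n z = g n z)"

definition ser_zero :: fser where "ser_zero = (\<lambda>n z. 0)"

definition Nser :: "fser \<Rightarrow> fser" where
  "Nser f = (\<lambda>n z. if n = 0 then 0 else f (n - 1) z)"

definition Dser :: "complex \<Rightarrow> fser \<Rightarrow> fser" where
  "Dser q f = (\<lambda>n z. q ^ n * f n z)"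

text \<open>Left complex (series in y, coefficients in (x1,x2) = (fst z, snd z)).\<close>
definition dy0 :: "complex \<Rightarrow> fser \<Rightarrow> fser \<times> fser" where
  "dy0 q f = (Nser f, (\<lambda>n z. snd z * f n z - q * (fst z * Dser q f n z)))"

definition dy1 :: "complex \<Rightarrow> fser \<times> fser \<Rightarrow> fser" where
  "dy1 q fg = (\<lambda>n z. (snd z * fst fg n z - fst z * Dser q (fst fg) n z) - Nser (snd fg) n z)"

definition piy :: "fser \<Rightarrow> complex \<Rightarrow> complex" where
  "piy f = (\<lambda>x. f 0 (x, x))"

text \<open>Right complex (series in x, coefficients in (y1,y2) = (fst z, snd z)).\<close>
definition dx0 :: "complex \<Rightarrow> fser \<Rightarrow> fser \<times> fser" where
  "dx0 q f = ((\<lambda>n z. fst z * f n z - q * (snd z * Dser q f n z)), Nser f)"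

definition dx1 :: "complex \<Rightarrow> fser \<times> fser \<Rightarrow> fser" where
  "dx1 q fg = (\<lambda>n z. Nser (fst fg) n z + (snd z * Dser q (snd fg) n z - fst z * snd fg n z))"

definition pix :: "fser \<Rightarrow> complex \<Rightarrow> complex" where
  "pix f = (\<lambda>y. f 0 (y, y))"

definition exact_complex ::
  "complex set \<Rightarrow> (fser \<Rightarrow> fser \<times> fser) \<Rightarrow> (fser \<times> fser \<Rightarrow> fser) \<Rightarrow> (fser \<Rightarrow> complex \<Rightarrow> complex) \<Rightarrow> bool"
where
  "exact_complex U d0 d1 pr \<longleftrightarrow>
     (\<forall>f\<in>ser_space U. ser_eq U (fst (d0 f)) ser_zero \<and> ser_eq U (snd (d0 f)) ser_zero
          \<longrightarrow> ser_eq U f ser_zero) \<and>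
     (\<forall>f\<in>ser_space U. \<forall>g\<in>ser_space U.
          ser_eq U (d1 (f, g)) ser_zero \<longleftrightarrow>
          (\<exists>h\<in>ser_space U. ser_eq U (fst (d0 h)) f \<and> ser_eq U (snd (d0 h)) g)) \<and>
     (\<forall>f\<in>ser_space U.
          (\<forall>x\<in>U. pr f x = 0) \<longleftrightarrow>
          (\<exists>g\<in>ser_space U. \<exists>h\<in>ser_space U. ser_eq U (d1 (g, h)) f)) \<and>
     (\<forall>h. h holomorphic_on U \<longrightarrow> (\<exists>f\<in>ser_space U. \<forall>x\<in>U. pr f x = h x))"

end

theory Submission
  imports Defs "HOL-Complex_Analysis.Complex_Analysis"
begin

(* Both complexes split degree by degree in the series variable. Since N is injective, the
  relations in degree n + 1 determine everything from the coefficients in degree n, and all that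
  remains lives in degree 0: a holomorphic F with (x2 - x1) F = 0 vanishes by continuity, and a
  holomorphic f vanishing on the diagonal is (x2 - x1) G with G holomorphic. The quotient G is
  holomorphic in each variable by the removable singularity theorem and continuous off the
  diagonal; Cauchy's formula over a circle that avoids the diagonal (an Osgood-type argument) makes
  it jointly complex differentiable. Exchanging the two coordinates turns the right complex into
  one of the same shape as the left one. *)

lemma holo2_const: "holo2 U (\<lambda>z. c)"
  unfolding holo2_def by (auto intro!: exI[of _ 0])

lemma holo2_cmult:
  assumes "holo2 U f"
  shows "holo2 U (\<lambda>z. c * f z)"
  unfolding holo2_def
proof
  fix z assume "z \<in> U \<times> U"
  then obtain a b where "(f has_derivative (\<lambda>h. a * fst h + b * snd h)) (at z)"
    using assms unfolding holo2_def by blast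
  then have "((\<lambda>z. c * f z) has_derivative (\<lambda>h. (c * a) * fst h + (c * b) * snd h)) (at z)"
    by (rule has_derivative_eq_rhs[OF has_derivative_mult_right]) (simp add: fun_eq_iff algebra_simps)
  then show "\<exists>a b. ((\<lambda>z. c * f z) has_derivative (\<lambda>h. a * fst h + b * snd h)) (at z)"
    by blast
qed

lemma holo2_fst:
  assumes "h holomorphic_on U" and "open U"
  shows "holo2 U (\<lambda>z. h (fst z))"
  unfolding holo2_def
proof
  fix z :: "complex \<times> complex" assume "z \<in> U \<times> U"
  then obtain h' where "(h has_field_derivative h') (at (fst z))"
    using assms by (auto simp: holomorphic_on_open)
  then have "((\<lambda>z. h (fst z)) has_derivative (\<lambda>k. h' * fst k + 0 * snd k)) (at z)"
    unfolding has_field_derivative_def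
    by (auto intro: has_derivative_eq_rhs[OF has_derivative_compose]
        has_derivative_fst[OF has_derivative_ident])
  then show "\<exists>a b. ((\<lambda>z. h (fst z)) has_derivative (\<lambda>k. a * fst k + b * snd k)) (at z)"
    by blast
qed

lemma holo2_imp_continuous_on:
  assumes "holo2 U f"
  shows "continuous_on (U \<times> U) f"
  using assms unfolding holo2_def
  by (meson continuous_at_imp_continuous_on has_derivative_continuous)

lemma has_field_derivative_fst_slice:
  fixes f :: "complex \<times> complex \<Rightarrow> complex"
  assumes "(f has_derivative (\<lambda>h. a * fst h + b * snd h)) (at (x, y))"
  shows "((\<lambda>x. f (x, y)) has_field_derivative a) (at x)"
proof -
  have "((\<lambda>x. (x, y)) has_derivative (\<lambda>h. (h, 0))) (at x)"
    by (auto intro!: derivative_eq_intros)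
  from has_derivative_compose[OF this assms] show ?thesis
    unfolding has_field_derivative_def by (simp add: o_def)
qed

lemma has_field_derivative_snd_slice:
  fixes f :: "complex \<times> complex \<Rightarrow> complex"
  assumes "(f has_derivative (\<lambda>h. a * fst h + b * snd h)) (at (x, y))"
  shows "((\<lambda>y. f (x, y)) has_field_derivative b) (at y)"
proof -
  have "((\<lambda>y. (x, y)) has_derivative (\<lambda>h. (0, h))) (at y)"
    by (auto intro!: derivative_eq_intros)
  from has_derivative_compose[OF this assms] show ?thesis
    unfolding has_field_derivative_def by (simp add: o_def)
qed

lemma holo2_holomorphic_on_fst_slice:
  assumes "holo2 U f" and "open U" and "y \<in> U"
  shows "(\<lambda>x. f (x, y)) holomorphic_on U"
  using assms has_field_derivative_fst_slice unfolding holo2_def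
  by (auto simp: holomorphic_on_open) blast

lemma holo2_holomorphic_on_snd_slice:
  assumes "holo2 U f" and "open U" and "x \<in> U"
  shows "(\<lambda>y. f (x, y)) holomorphic_on U"
  using assms has_field_derivative_snd_slice unfolding holo2_def
  by (auto simp: holomorphic_on_open) blast

lemma diagonal_partials_sum_zero:
  fixes f :: "complex \<times> complex \<Rightarrow> complex"
  assumes "(f has_derivative (\<lambda>h. a * fst h + b * snd h)) (at (x, x))"
    and "open U" and "x \<in> U" and "\<And>y. y \<in> U \<Longrightarrow> f (y, y) = 0"
  shows "a + b = 0"
proof -
  have "((\<lambda>x. (x, x)) has_derivative (\<lambda>h. (h, h))) (at x)"
    by (auto intro!: derivative_eq_intros)
  from has_derivative_compose[OF this assms(1)]
  have "((\<lambda>x. f (x, x)) has_field_derivative (a + b)) (at x)"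
    unfolding has_field_derivative_def
    by (rule has_derivative_eq_rhs) (auto simp: fun_eq_iff algebra_simps)
  then have "((\<lambda>x. 0) has_field_derivative (a + b)) (at x)"
    by (rule has_field_derivative_transform_within_open[OF _ assms(2,3)]) (simp add: assms(4))
  then show ?thesis
    using DERIV_unique DERIV_const by blast
qed

lemma cauchy_kernel_remainder_bound:
  fixes G H w x b :: complex
  assumes R: "0 < R" and w: "norm (w - b) = R" and x: "norm (x - b) \<le> R / 2"
    and G: "norm (G - H) \<le> \<eta>" and H: "norm H \<le> M" and "0 \<le> \<eta>" and "0 \<le> M"
  shows "norm (G / (w - x) - G / (w - b) - (x - b) * (H / (w - b)^2))
           \<le> norm (x - b) * (2 * \<eta> / R^2 + 2 * M * norm (x - b) / R^3)"
proof -
  have wb: "w - b \<noteq> 0" using w R by auto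
  have wx: "R / 2 \<le> norm (w - x)"
    using norm_triangle_ineq2[of "w - b" "x - b"] w x by (simp add: algebra_simps)
  then have wx0: "w - x \<noteq> 0" using R by auto
  have quot: "G / p - G / s - (s - p) * (H / s^2)
      = (s - p) * ((G - H) / (p * s) + H * (s - p) / (p * s^2))" if "p \<noteq> 0" "s \<noteq> 0" for p s
    using that by (simp add: field_simps power2_eq_square)
  have "(w - b) - (w - x) = x - b" by simp
  then have eq: "G / (w - x) - G / (w - b) - (x - b) * (H / (w - b)^2)
      = (x - b) * ((G - H) / ((w - x) * (w - b)) + H * (x - b) / ((w - x) * (w - b)^2))"
    using quot[OF wx0 wb] by simp
  have n1: "norm ((G - H) / ((w - x) * (w - b))) \<le> \<eta> / ((R / 2) * R)"
    unfolding norm_divide norm_mult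
    by (rule frac_le) (use assms wx in \<open>auto intro!: mult_mono\<close>)
  have n2: "norm (H * (x - b) / ((w - x) * (w - b)^2)) \<le> M * norm (x - b) / ((R / 2) * R^2)"
    unfolding norm_divide norm_mult norm_power
    by (rule frac_le) (use assms wx in \<open>auto intro!: mult_mono\<close>)
  have "norm (G / (w - x) - G / (w - b) - (x - b) * (H / (w - b)^2))
      \<le> norm (x - b) * (\<eta> / ((R / 2) * R) + M * norm (x - b) / ((R / 2) * R^2))"
    unfolding eq norm_mult
    by (intro mult_left_mono order_trans[OF norm_triangle_ineq] add_mono n1 n2) auto
  also have "\<dots> = norm (x - b) * (2 * \<eta> / R^2 + 2 * M * norm (x - b) / R^3)"
    using R by (simp add: field_simps power2_eq_square power3_eq_cube)
  finally show ?thesis .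
qed

lemma slice_remainder_bound:
  fixes g :: "complex \<times> complex \<Rightarrow> complex"
  assumes R: "0 < R"
    and hol1: "(\<lambda>w. g (x1, w)) holomorphic_on cball b R"
    and hola: "(\<lambda>w. g (a, w)) holomorphic_on cball b R"
    and x2: "norm (x2 - b) \<le> R / 2"
    and \<eta>: "\<And>w. norm (w - b) = R \<Longrightarrow> norm (g (x1, w) - g (a, w)) \<le> \<eta>"
    and M: "\<And>w. norm (w - b) = R \<Longrightarrow> norm (g (a, w)) \<le> M"
    and "0 \<le> \<eta>" and "0 \<le> M"
  shows "norm (g (x1, x2) - g (x1, b) - deriv (\<lambda>w. g (a, w)) b * (x2 - b))
           \<le> norm (x2 - b) * (2 * \<eta> / R + 2 * M * norm (x2 - b) / R^2)"
proof -
  define B where "B = deriv (\<lambda>w. g (a, w)) b"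
  define K where "K = norm (x2 - b) * (2 * \<eta> / R^2 + 2 * M * norm (x2 - b) / R^3)"
  have "norm (x2 - b) < R" using x2 R by linarith
  then have I1: "((\<lambda>w. g (x1, w) / (w - x2)) has_contour_integral (2 * pi * \<i> * g (x1, x2))) (circlepath b R)"
    using Cauchy_integral_circlepath_simple[OF hol1] by simp
  have I2: "((\<lambda>w. g (x1, w) / (w - b)) has_contour_integral (2 * pi * \<i> * g (x1, b))) (circlepath b R)"
    using Cauchy_integral_circlepath_simple[OF hol1, of b] R by simp
  have I3: "((\<lambda>w. g (a, w) / (w - b)^2) has_contour_integral (2 * pi * \<i> * B)) (circlepath b R)"
    using Cauchy_has_contour_integral_higher_derivative_circlepath[OF
        holomorphic_on_imp_continuous_on[OF hola] holomorphic_on_subset[OF hola], of b 1] R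
    by (auto simp: B_def power2_eq_square)
  have "((\<lambda>w. g (x1, w) / (w - x2) - g (x1, w) / (w - b) - (x2 - b) * (g (a, w) / (w - b)^2))
          has_contour_integral (2 * pi * \<i> * g (x1, x2) - 2 * pi * \<i> * g (x1, b)
            - (x2 - b) * (2 * pi * \<i> * B))) (circlepath b R)"
    by (intro has_contour_integral_diff has_contour_integral_lmul I1 I2 I3)
  then have "((\<lambda>w. g (x1, w) / (w - x2) - g (x1, w) / (w - b) - (x2 - b) * (g (a, w) / (w - b)^2))
          has_contour_integral (2 * pi * \<i> * (g (x1, x2) - g (x1, b) - B * (x2 - b)))) (circlepath b R)"
    by (simp add: algebra_simps)
  moreover have "0 \<le> K" unfolding K_def using assms by auto
  moreover have "norm (g (x1, w) / (w - x2) - g (x1, w) / (w - b) - (x2 - b) * (g (a, w) / (w - b)^2)) \<le> K"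
    if "norm (w - b) = R" for w
    unfolding K_def using cauchy_kernel_remainder_bound[OF R that x2 \<eta>[OF that] M[OF that]] assms by simp
  ultimately have "norm (2 * pi * \<i> * (g (x1, x2) - g (x1, b) - B * (x2 - b))) \<le> K * (2 * pi * R)"
    using has_contour_integral_bound_circlepath R by blast
  then have "norm (g (x1, x2) - g (x1, b) - B * (x2 - b)) \<le> K * R"
    by (simp add: norm_mult)
  also have "K * R = norm (x2 - b) * (2 * \<eta> / R + 2 * M * norm (x2 - b) / R^2)"
    unfolding K_def using R by (simp add: field_simps power2_eq_square power3_eq_cube)
  finally show ?thesis by (simp add: B_def)
qed

lemma has_derivative_Pair_from_slices:
  fixes g :: "complex \<times> complex \<Rightarrow> complex"
  assumes dA: "((\<lambda>x. g (x, b)) has_field_derivative A) (at a)"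
    and rem: "\<And>e. 0 < e \<Longrightarrow> \<exists>d>0. \<forall>x y. norm (x - a) < d \<longrightarrow> norm (y - b) < d \<longrightarrow>
                 norm (g (x, y) - g (x, b) - B * (y - b)) \<le> e * norm (y - b)"
  shows "(g has_derivative (\<lambda>h. A * fst h + B * snd h)) (at (a, b))"
  unfolding has_derivative_at_alt
proof (intro conjI allI impI)
  show "bounded_linear (\<lambda>h::complex \<times> complex. A * fst h + B * snd h)"
    by (intro bounded_linear_add bounded_linear_mult_right[THEN bounded_linear_compose]
        bounded_linear_fst bounded_linear_snd)
  fix e :: real assume e: "0 < e"
  obtain d1 where d1: "0 < d1" and slice1: "\<And>x. norm (x - a) < d1 \<Longrightarrow>
      norm (g (x, b) - g (a, b) - A * (x - a)) \<le> e / 2 * norm (x - a)"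
    using dA e unfolding has_field_derivative_def has_derivative_at_alt
    by (metis half_gt_zero mult.commute)
  obtain d2 where d2: "0 < d2" and slice2: "\<And>x y. norm (x - a) < d2 \<Longrightarrow> norm (y - b) < d2 \<Longrightarrow>
      norm (g (x, y) - g (x, b) - B * (y - b)) \<le> e / 2 * norm (y - b)"
    using rem[of "e / 2"] e by auto
  show "\<exists>d>0. \<forall>z. norm (z - (a, b)) < d \<longrightarrow>
      norm (g z - g (a, b) - (A * fst (z - (a, b)) + B * snd (z - (a, b)))) \<le> e * norm (z - (a, b))"
  proof (intro exI[of _ "min d1 d2"] conjI allI impI)
    show "0 < min d1 d2" using d1 d2 by simp
    fix z assume z: "norm (z - (a, b)) < min d1 d2"
    obtain x y where xy: "z = (x, y)" by (cases z)
    have nx: "norm (x - a) \<le> norm (z - (a, b))" and ny: "norm (y - b) \<le> norm (z - (a, b))"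
      unfolding xy by (simp_all add: norm_fst_le norm_snd_le)
    have "g z - g (a, b) - (A * fst (z - (a, b)) + B * snd (z - (a, b)))
        = (g (x, y) - g (x, b) - B * (y - b)) + (g (x, b) - g (a, b) - A * (x - a))"
      unfolding xy by (simp add: algebra_simps)
    also have "norm \<dots> \<le> e / 2 * norm (y - b) + e / 2 * norm (x - a)"
      using nx ny z by (intro order_trans[OF norm_triangle_ineq] add_mono slice1 slice2) auto
    also have "\<dots> \<le> e / 2 * norm (z - (a, b)) + e / 2 * norm (z - (a, b))"
      using nx ny e by (intro add_mono mult_left_mono) auto
    finally show "norm (g z - g (a, b) - (A * fst (z - (a, b)) + B * snd (z - (a, b))))
        \<le> e * norm (z - (a, b))" by simp
  qed
qed

lemma osgood_has_derivative:
  fixes g :: "complex \<times> complex \<Rightarrow> complex"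
  assumes r: "0 < r" and R: "0 < R"
    and hol: "\<And>x. x \<in> cball a r \<Longrightarrow> (\<lambda>w. g (x, w)) holomorphic_on cball b R"
    and cont: "continuous_on (cball a r \<times> sphere b R) g"
    and dA: "((\<lambda>x. g (x, b)) has_field_derivative A) (at a)"
  shows "(g has_derivative (\<lambda>h. A * fst h + deriv (\<lambda>w. g (a, w)) b * snd h)) (at (a, b))"
proof (rule has_derivative_Pair_from_slices[OF dA])
  fix e :: real assume e: "0 < e"
  have cpt: "compact (cball a r \<times> sphere b R)" by (intro compact_Times) auto
  obtain M where M: "0 < M" and bound: "\<And>z. z \<in> cball a r \<times> sphere b R \<Longrightarrow> norm (g z) \<le> M"
    using compact_imp_bounded[OF compact_continuous_image[OF cont cpt]] unfolding bounded_pos by blast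
  obtain du where du: "0 < du" and uc: "\<And>z z'. z \<in> cball a r \<times> sphere b R \<Longrightarrow>
      z' \<in> cball a r \<times> sphere b R \<Longrightarrow> dist z' z < du \<Longrightarrow> dist (g z') (g z) < e * R / 8"
    using compact_uniformly_continuous[OF cont cpt, unfolded uniformly_continuous_on_def, rule_format,
        of "e * R / 8"] e R by auto
  define d where "d = min (min r (R / 2)) (min du (e * R^2 / (8 * M)))"
  show "\<exists>d>0. \<forall>x y. norm (x - a) < d \<longrightarrow> norm (y - b) < d \<longrightarrow>
      norm (g (x, y) - g (x, b) - deriv (\<lambda>w. g (a, w)) b * (y - b)) \<le> e * norm (y - b)"
  proof (intro exI[of _ d] conjI allI impI)
    show "0 < d" unfolding d_def using r R du e M by auto
    fix x y assume x: "norm (x - a) < d" and y: "norm (y - b) < d"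
    have xa: "x \<in> cball a r" using x by (auto simp: d_def dist_norm norm_minus_commute)
    have "norm (g (x, w) - g (a, w)) \<le> e * R / 8" if "norm (w - b) = R" for w
    proof -
      have "dist (x, w) (a, w) = dist x a" by (simp add: dist_Pair_Pair)
      then have "dist (x, w) (a, w) < du" using x by (simp add: d_def dist_norm)
      then show ?thesis
        using uc[of "(a, w)" "(x, w)"] that xa r by (simp add: dist_norm norm_minus_commute)
    qed
    moreover have "norm (g (a, w)) \<le> M" if "norm (w - b) = R" for w
      using bound[of "(a, w)"] that r by (auto simp: dist_norm norm_minus_commute)
    ultimately have "norm (g (x, y) - g (x, b) - deriv (\<lambda>w. g (a, w)) b * (y - b))
        \<le> norm (y - b) * (2 * (e * R / 8) / R + 2 * M * norm (y - b) / R^2)"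
      using y e r R M by (intro slice_remainder_bound hol xa) (auto simp: d_def)
    also have "\<dots> \<le> norm (y - b) * (e / 4 + 2 * M * (e * R^2 / (8 * M)) / R^2)"
      using y R M by (intro mult_left_mono add_mono divide_right_mono) (auto simp: d_def)
    also have "\<dots> = e / 2 * norm (y - b)"
      using R M by (simp add: field_simps)
    also have "\<dots> \<le> e * norm (y - b)"
      using e by (intro mult_right_mono) auto
    finally show "norm (g (x, y) - g (x, b) - deriv (\<lambda>w. g (a, w)) b * (y - b)) \<le> e * norm (y - b)" .
  qed
qed

lemma cball_sphere_avoiding_radii:
  fixes a b :: complex
  assumes "open U" and "a \<in> U" and "b \<in> U"
  obtains r R where "0 < r" and "0 < R" and "cball a r \<subseteq> U" and "cball b R \<subseteq> U"
    and "\<And>x w. x \<in> cball a r \<Longrightarrow> w \<in> sphere b R \<Longrightarrow> x \<noteq> w"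
proof -
  obtain \<epsilon>a \<epsilon>b where "0 < \<epsilon>a" "ball a \<epsilon>a \<subseteq> U" "0 < \<epsilon>b" "ball b \<epsilon>b \<subseteq> U"
    using assms open_contains_ball by meson
  define \<delta> where "\<delta> = min (min \<epsilon>a \<epsilon>b) (if a = b then 1 else dist a b)"
  have \<delta>: "0 < \<delta>" "ball a \<delta> \<subseteq> U" "ball b \<delta> \<subseteq> U"
    unfolding \<delta>_def using \<open>0 < \<epsilon>a\<close> \<open>ball a \<epsilon>a \<subseteq> U\<close> \<open>0 < \<epsilon>b\<close> \<open>ball b \<epsilon>b \<subseteq> U\<close>
    by auto
  show thesis
  proof (rule that[of "\<delta> / 4" "\<delta> / 2"])
    show "cball a (\<delta> / 4) \<subseteq> U" "cball b (\<delta> / 2) \<subseteq> U"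
      using \<delta> by (auto simp: subset_iff)
    fix x w assume x: "x \<in> cball a (\<delta> / 4)" and w: "w \<in> sphere b (\<delta> / 2)"
    show "x \<noteq> w"
    proof
      assume "x = w"
      then have "dist a b \<le> \<delta> / 4 + \<delta> / 2"
        using x w dist_triangle[of a b x] by (simp add: dist_commute)
      moreover have "a \<noteq> b \<Longrightarrow> \<delta> \<le> dist a b" unfolding \<delta>_def by auto
      ultimately show False
        using \<delta> \<open>x = w\<close> x w by (cases "a = b") auto
    qed
  qed (use \<delta> in auto)
qed

text \<open>Continuity of \<open>g\<close> is required only off the diagonal: a circle around \<open>b\<close> can be
  chosen to avoid a small disc around \<open>a\<close>.\<close>
lemma holo2_if_separately_holomorphic:
  fixes g :: "complex \<times> complex \<Rightarrow> complex"
  assumes U: "open U"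
    and hol1: "\<And>y. y \<in> U \<Longrightarrow> (\<lambda>x. g (x, y)) holomorphic_on U"
    and hol2: "\<And>x. x \<in> U \<Longrightarrow> (\<lambda>y. g (x, y)) holomorphic_on U"
    and cont: "continuous_on {z \<in> U \<times> U. fst z \<noteq> snd z} g"
  shows "holo2 U g"
  unfolding holo2_def
proof
  fix p assume "p \<in> U \<times> U"
  then obtain a b where p: "p = (a, b)" and a: "a \<in> U" and b: "b \<in> U" by auto
  obtain r R where r: "0 < r" and R: "0 < R" and aU: "cball a r \<subseteq> U" and bU: "cball b R \<subseteq> U"
    and apart: "\<And>x w. x \<in> cball a r \<Longrightarrow> w \<in> sphere b R \<Longrightarrow> x \<noteq> w"
    using cball_sphere_avoiding_radii[OF U a b] by blast
  have "cball a r \<times> sphere b R \<subseteq> {z \<in> U \<times> U. fst z \<noteq> snd z}"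
    using aU bU apart sphere_cball by (auto simp: subset_iff)
  then have cont_torus: "continuous_on (cball a r \<times> sphere b R) g"
    using cont continuous_on_subset by blast
  obtain A where dA: "((\<lambda>x. g (x, b)) has_field_derivative A) (at a)"
    using hol1[OF b] a U by (auto simp: holomorphic_on_open)
  have "(\<lambda>w. g (x, w)) holomorphic_on cball b R" if "x \<in> cball a r" for x
    using hol2[of x] aU bU that by (blast intro: holomorphic_on_subset)
  from osgood_has_derivative[OF r R this cont_torus dA]
  show "\<exists>a b. (g has_derivative (\<lambda>h. a * fst h + b * snd h)) (at p)"
    unfolding p by blast
qed

lemma eq_zero_if_mult_diagonal_eq_zero:
  fixes F :: "complex \<times> complex \<Rightarrow> complex"
  assumes U: "open U" and F: "continuous_on (U \<times> U) F"
    and eq: "\<And>z. z \<in> U \<times> U \<Longrightarrow> (snd z - fst z) * F z = 0"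
    and z: "z \<in> U \<times> U"
  shows "F z = 0"
proof (cases "fst z = snd z")
  case False
  then show ?thesis using eq[OF z] by simp
next
  case True
  then obtain x where zx: "z = (x, x)" and x: "x \<in> U" using z by (metis mem_Times_iff prod.collapse)
  have "continuous_on U (\<lambda>w. F (x, w))"
    using F x by (auto intro!: continuous_on_compose2[OF F] continuous_intros)
  then have "((\<lambda>w. F (x, w)) \<longlongrightarrow> F (x, x)) (at x)"
    using U x by (simp add: continuous_on_eq_continuous_at isCont_def)
  moreover have "eventually (\<lambda>w. F (x, w) = 0) (at x)"
    using eventually_at_in_open[OF U x] by eventually_elim (use eq[of "(x, _)"] x in auto)
  then have "((\<lambda>w. F (x, w)) \<longlongrightarrow> 0) (at x)"
    by (rule tendsto_eventually)
  ultimately show ?thesis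
    using zx tendsto_unique[OF at_neq_bot] by blast
qed

definition diag_quotient :: "(complex \<times> complex \<Rightarrow> complex) \<Rightarrow> complex \<times> complex \<Rightarrow> complex" where
  "diag_quotient f z =
     (if fst z = snd z then deriv (\<lambda>w. f (fst z, w)) (fst z) else f z / (snd z - fst z))"

lemma diag_quotient_mult:
  assumes "fst z = snd z \<Longrightarrow> f z = 0"
  shows "(snd z - fst z) * diag_quotient f z = f z"
  using assms by (auto simp: diag_quotient_def)

lemma holomorphic_on_snd_slice_diag_quotient:
  assumes U: "open U" and f: "holo2 U f" and x: "x \<in> U" and f0: "f (x, x) = 0"
  shows "(\<lambda>w. diag_quotient f (x, w)) holomorphic_on U"
proof -
  have "(\<lambda>w. if w = x then deriv (\<lambda>w. f (x, w)) x else (f (x, w) - f (x, x)) / (w - x))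
      holomorphic_on U"
    by (rule pole_lemma_open[OF holo2_holomorphic_on_snd_slice[OF f U x] U])
  also have "(\<lambda>w. if w = x then deriv (\<lambda>w. f (x, w)) x else (f (x, w) - f (x, x)) / (w - x))
      = (\<lambda>w. diag_quotient f (x, w))"
    using f0 by (auto simp: diag_quotient_def fun_eq_iff)
  finally show ?thesis .
qed

lemma holomorphic_on_fst_slice_diag_quotient:
  assumes U: "open U" and f: "holo2 U f" and y: "y \<in> U" and f0: "\<And>x. x \<in> U \<Longrightarrow> f (x, x) = 0"
  shows "(\<lambda>x. diag_quotient f (x, y)) holomorphic_on U"
proof -
  obtain a b where d: "(f has_derivative (\<lambda>h. a * fst h + b * snd h)) (at (y, y))"
    using f y unfolding holo2_def by blast
  have "a + b = 0"
    by (rule diagonal_partials_sum_zero[OF d U y f0])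
  then have "deriv (\<lambda>x. - f (x, y)) y = deriv (\<lambda>w. f (y, w)) y"
    using has_field_derivative_fst_slice[OF d, THEN DERIV_minus] has_field_derivative_snd_slice[OF d]
    by (simp add: DERIV_imp_deriv add_eq_0_iff)
  moreover have "(\<lambda>x. if x = y then deriv (\<lambda>x. - f (x, y)) y else (- f (x, y) - - f (y, y)) / (x - y))
      holomorphic_on U"
    using holo2_holomorphic_on_fst_slice[OF f U y]
    by (intro pole_lemma_open U holomorphic_intros)
  ultimately show ?thesis
    using f0[OF y] by (auto simp: diag_quotient_def minus_divide_right elim!: holomorphic_transform)
qed

lemma holo2_diag_quotient:
  assumes U: "open U" and f: "holo2 U f" and f0: "\<And>x. x \<in> U \<Longrightarrow> f (x, x) = 0"
  shows "holo2 U (diag_quotient f)"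
proof (rule holo2_if_separately_holomorphic[OF U])
  show "(\<lambda>x. diag_quotient f (x, y)) holomorphic_on U" if "y \<in> U" for y
    using holomorphic_on_fst_slice_diag_quotient[OF U f that f0] .
  show "(\<lambda>y. diag_quotient f (x, y)) holomorphic_on U" if "x \<in> U" for x
    using holomorphic_on_snd_slice_diag_quotient[OF U f that f0[OF that]] .
  have "continuous_on {z \<in> U \<times> U. fst z \<noteq> snd z} (\<lambda>z. f z / (snd z - fst z))"
    using holo2_imp_continuous_on[OF f]
    by (intro continuous_intros) (auto elim: continuous_on_subset)
  then show "continuous_on {z \<in> U \<times> U. fst z \<noteq> snd z} (diag_quotient f)"
    by (rule continuous_on_eq) (simp add: diag_quotient_def)
qed

text \<open>Both complexes, the right one after exchanging the two summands, have this shape: in degree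
  \<open>n\<close> multiplication by \<open>m n\<close>, where \<open>m 0 = x2 - x1\<close>, played against the shift with a sign \<open>\<sigma>\<close>,
  \<open>\<sigma>\<^sup>2 = 1\<close>.\<close>
definition diag_d0 :: "complex \<Rightarrow> fser \<Rightarrow> fser \<Rightarrow> fser \<times> fser" where
  "diag_d0 \<sigma> m h = (Nser h, \<lambda>n z. - \<sigma> * m (Suc n) z * h n z)"

definition diag_d1 :: "complex \<Rightarrow> fser \<Rightarrow> fser \<times> fser \<Rightarrow> fser" where
  "diag_d1 \<sigma> m fg = (\<lambda>n z. m n z * fst fg n z + \<sigma> * Nser (snd fg) n z)"

lemma diag_d0_injective:
  assumes "ser_eq U (fst (diag_d0 \<sigma> m f)) ser_zero"
  shows "ser_eq U f ser_zero"
  unfolding ser_eq_def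
proof (intro allI ballI)
  fix n z assume "z \<in> U \<times> U"
  then have "Nser f (Suc n) z = 0"
    using assms unfolding ser_eq_def diag_d0_def ser_zero_def fst_conv by blast
  then show "f n z = ser_zero n z" by (simp add: Nser_def ser_zero_def)
qed

lemma diag_ker_d1_subset_im_d0:
  assumes U: "open U" and \<sigma>: "\<sigma> * \<sigma> = 1" and m0: "\<And>z. m 0 z = snd z - fst z"
    and f: "f \<in> ser_space U" and d1: "ser_eq U (diag_d1 \<sigma> m (f, g)) ser_zero"
  shows "\<exists>h\<in>ser_space U. ser_eq U (fst (diag_d0 \<sigma> m h)) f \<and> ser_eq U (snd (diag_d0 \<sigma> m h)) g"
proof (intro bexI conjI)
  have d1': "m n z * f n z + \<sigma> * Nser g n z = 0" if "z \<in> U \<times> U" for n z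
    using d1 that unfolding ser_eq_def diag_d1_def ser_zero_def fst_conv snd_conv by blast
  have "f 0 z = 0" if "z \<in> U \<times> U" for z
    using f d1'[of _ 0] m0 that
    by (intro eq_zero_if_mult_diagonal_eq_zero[OF U, of "f 0"] holo2_imp_continuous_on)
       (auto simp: ser_space_def Nser_def)
  then show "ser_eq U (fst (diag_d0 \<sigma> m (\<lambda>n. f (Suc n)))) f"
    by (auto simp: ser_eq_def diag_d0_def Nser_def split: nat.split)
  have "g n z = - \<sigma> * m (Suc n) z * f (Suc n) z" if "z \<in> U \<times> U" for n z
  proof -
    have "g n z = \<sigma> * (\<sigma> * g n z)" using \<sigma> by (simp add: mult.assoc[symmetric])
    also have "\<sigma> * g n z = - m (Suc n) z * f (Suc n) z"
      using d1'[OF that, of "Suc n"] by (simp add: Nser_def eq_neg_iff_add_eq_0 add.commute)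
    finally show ?thesis by simp
  qed
  then show "ser_eq U (snd (diag_d0 \<sigma> m (\<lambda>n. f (Suc n)))) g"
    by (simp add: ser_eq_def diag_d0_def)
  show "(\<lambda>n. f (Suc n)) \<in> ser_space U"
    using f by (simp add: ser_space_def)
qed

lemma diag_im_d0_subset_ker_d1:
  assumes \<sigma>: "\<sigma> * \<sigma> = 1"
    and hf: "ser_eq U (fst (diag_d0 \<sigma> m h)) f" and hg: "ser_eq U (snd (diag_d0 \<sigma> m h)) g"
  shows "ser_eq U (diag_d1 \<sigma> m (f, g)) ser_zero"
  unfolding ser_eq_def
proof (intro allI ballI)
  fix n z assume z: "z \<in> U \<times> U"
  have f: "f n z = Nser h n z" and g: "g n z = - \<sigma> * m (Suc n) z * h n z" for n
    using hf hg z by (auto simp: ser_eq_def diag_d0_def)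
  show "diag_d1 \<sigma> m (f, g) n z = ser_zero n z"
  proof (cases n)
    case 0
    then show ?thesis by (simp add: diag_d1_def ser_zero_def f Nser_def)
  next
    case (Suc k)
    have "\<sigma> * (- \<sigma> * m (Suc k) z * h k z) = - (\<sigma> * \<sigma>) * m (Suc k) z * h k z"
      by (simp add: algebra_simps)
    then show ?thesis
      using Suc \<sigma> by (simp add: diag_d1_def ser_zero_def f g Nser_def)
  qed
qed

lemma diag_ker_piy_subset_im_d1:
  assumes U: "open U" and \<sigma>: "\<sigma> * \<sigma> = 1" and m0: "\<And>z. m 0 z = snd z - fst z"
    and f: "f \<in> ser_space U" and pf: "\<And>x. x \<in> U \<Longrightarrow> piy f x = 0"
  shows "\<exists>g\<in>ser_space U. \<exists>h\<in>ser_space U. ser_eq U (diag_d1 \<sigma> m (g, h)) f"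
proof -
  define g where "g = (\<lambda>n::nat. if n = 0 then diag_quotient (f 0) else (\<lambda>z. 0))"
  define h where "h = (\<lambda>n z. \<sigma> * f (Suc n) z)"
  have "holo2 U (diag_quotient (f 0))"
    using f pf by (intro holo2_diag_quotient U) (auto simp: ser_space_def piy_def)
  then have "g \<in> ser_space U"
    by (simp add: g_def ser_space_def holo2_const)
  moreover have "h \<in> ser_space U"
    using f by (simp add: h_def ser_space_def holo2_cmult)
  moreover have "diag_d1 \<sigma> m (g, h) n z = f n z" if "z \<in> U \<times> U" for n z
  proof (cases n)
    case 0
    have "fst z = snd z \<Longrightarrow> f 0 z = 0"
      using pf that by (cases z) (auto simp: piy_def)
    then show ?thesis
      using 0 m0 diag_quotient_mult[of z "f 0"] by (simp add: diag_d1_def g_def Nser_def)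
  next
    case (Suc k)
    then show ?thesis
      using \<sigma> by (simp add: diag_d1_def g_def h_def Nser_def mult.assoc[symmetric])
  qed
  ultimately show ?thesis
    unfolding ser_eq_def by blast
qed

lemma diag_im_d1_subset_ker_piy:
  assumes m0: "\<And>z. m 0 z = snd z - fst z"
    and d1: "ser_eq U (diag_d1 \<sigma> m (g, h)) f" and x: "x \<in> U"
  shows "piy f x = 0"
proof -
  have "diag_d1 \<sigma> m (g, h) 0 (x, x) = f 0 (x, x)"
    using d1 x by (simp add: ser_eq_def)
  then show ?thesis
    using m0 by (simp add: diag_d1_def Nser_def piy_def)
qed

theorem exact_diag_complex:
  assumes U: "open U" and \<sigma>: "\<sigma> * \<sigma> = 1" and m0: "\<And>z. m 0 z = snd z - fst z"
  shows "exact_complex U (diag_d0 \<sigma> m) (diag_d1 \<sigma> m) piy"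
  unfolding exact_complex_def
proof (intro conjI ballI allI impI)
  show "ser_eq U f ser_zero" if "ser_eq U (fst (diag_d0 \<sigma> m f)) ser_zero \<and> ser_eq U (snd (diag_d0 \<sigma> m f)) ser_zero" for f
    using that diag_d0_injective by blast
  show "ser_eq U (diag_d1 \<sigma> m (f, g)) ser_zero \<longleftrightarrow>
      (\<exists>h\<in>ser_space U. ser_eq U (fst (diag_d0 \<sigma> m h)) f \<and> ser_eq U (snd (diag_d0 \<sigma> m h)) g)"
    if "f \<in> ser_space U" for f g
    using diag_ker_d1_subset_im_d0[where m = m, OF U \<sigma> m0 that] diag_im_d0_subset_ker_d1[OF \<sigma>] by blast
  show "(\<forall>x\<in>U. piy f x = 0) \<longleftrightarrow> (\<exists>g\<in>ser_space U. \<exists>h\<in>ser_space U. ser_eq U (diag_d1 \<sigma> m (g, h)) f)"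
    if "f \<in> ser_space U" for f
    using diag_ker_piy_subset_im_d1[where m = m, OF U \<sigma> m0 that] diag_im_d1_subset_ker_piy[where m = m, OF m0] by blast
  show "\<exists>f\<in>ser_space U. \<forall>x\<in>U. piy f x = h x" if "h holomorphic_on U" for h
    using holo2_fst[OF that U] by (intro bexI[of _ "\<lambda>n z. h (fst z)"]) (auto simp: ser_space_def piy_def)
qed

lemma exact_complex_swap:
  assumes "exact_complex U d0 d1 pr"
  shows "exact_complex U (\<lambda>h. prod.swap (d0 h)) (\<lambda>fg. d1 (prod.swap fg)) pr"
  unfolding exact_complex_def fst_swap snd_swap swap_simp
proof (intro conjI)
  show "\<forall>f\<in>ser_space U. ser_eq U (snd (d0 f)) ser_zero \<and> ser_eq U (fst (d0 f)) ser_zero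
      \<longrightarrow> ser_eq U f ser_zero"
    using assms unfolding exact_complex_def by blast
  show "\<forall>f\<in>ser_space U. \<forall>g\<in>ser_space U. ser_eq U (d1 (g, f)) ser_zero \<longleftrightarrow>
      (\<exists>h\<in>ser_space U. ser_eq U (snd (d0 h)) f \<and> ser_eq U (fst (d0 h)) g)"
    using assms unfolding exact_complex_def by blast
  show "\<forall>f\<in>ser_space U. (\<forall>x\<in>U. pr f x = 0) \<longleftrightarrow>
      (\<exists>g\<in>ser_space U. \<exists>h\<in>ser_space U. ser_eq U (d1 (h, g)) f)"
    using assms unfolding exact_complex_def by blast
  show "\<forall>h. h holomorphic_on U \<longrightarrow> (\<exists>f\<in>ser_space U. \<forall>x\<in>U. pr f x = h x)"
    using assms unfolding exact_complex_def by blast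
qed

lemma dy0_eq_diag_d0: "dy0 q = diag_d0 (-1) (\<lambda>n z. snd z - q ^ n * fst z)"
  by (simp add: fun_eq_iff dy0_def diag_d0_def Dser_def algebra_simps)

lemma dy1_eq_diag_d1: "dy1 q = diag_d1 (-1) (\<lambda>n z. snd z - q ^ n * fst z)"
  by (simp add: fun_eq_iff dy1_def diag_d1_def Dser_def algebra_simps)

lemma dx0_eq_swap_diag_d0: "dx0 q = (\<lambda>h. prod.swap (diag_d0 1 (\<lambda>n z. q ^ n * snd z - fst z) h))"
  by (simp add: fun_eq_iff dx0_def diag_d0_def Dser_def algebra_simps)

lemma dx1_eq_diag_d1_swap: "dx1 q = (\<lambda>fg. diag_d1 1 (\<lambda>n z. q ^ n * snd z - fst z) (prod.swap fg))"
  by (simp add: fun_eq_iff dx1_def diag_d1_def Dser_def algebra_simps)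

theorem proposition5p2:
  fixes q :: complex and Ux Uy :: "complex set"
  assumes "0 < norm q" and "norm q < 1"
    and "q_open q Ux" and "q_open q Uy"
  shows "exact_complex Ux (dy0 q) (dy1 q) piy \<and> exact_complex Uy (dx0 q) (dx1 q) pix"
proof
  have "open Ux" and "open Uy"
    using assms(3,4) by (simp_all add: q_open_def)
  show "exact_complex Ux (dy0 q) (dy1 q) piy"
    unfolding dy0_eq_diag_d0 dy1_eq_diag_d1
    by (rule exact_diag_complex[OF \<open>open Ux\<close>]) simp_all
  have pix_eq_piy: "pix = piy"
    by (simp add: fun_eq_iff pix_def piy_def)
  show "exact_complex Uy (dx0 q) (dx1 q) pix"
    unfolding dx0_eq_swap_diag_d0 dx1_eq_diag_d1_swap pix_eq_piy
    by (intro exact_complex_swap exact_diag_complex[OF \<open>open Uy\<close>]) simp_all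
qed

end
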